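(* Let $0<\lambda<\sqrt2$. Define coefficients $a_0=a_1=-\dfrac{1}{1-\lambda^2/2}$ and $a_{n+1}=\dfrac{n}{(n+1)(1+\lambda^2 n/2)}\,a_n$ for $n\ge1$, and set $$Y(x)=a_0\ln x+\sum_{n=1}^\infty a_nx^n,\qquad x>0$$ (the series converges for all $x$). Then $Y$ satisfies $\tfrac12\lambda^2x^2Y''+x(1-x)Y'=-1$ on $(0,\infty)$. For $0<\epsilon<1$ let $u(x;\epsilon)$ be the solution of $$\tfrac12\lambda^2x^2u''(x)+x(1-x)u'(x)=-1\ \ (\epsilon<x<1),\qquad u(\epsilon)=0,\ u(1)=0.$$ Then for every $x\in(0,1)$, $$\lim_{\epsilon\to0}u(x;\epsilon)=Y(x)-Y(1),$$ and $u(x):=Y(x)-Y(1)$ solves $\tfrac12\lambda^2x^2u''+x(1-x)u'=-1$ on $(0,1)$ with $u(1)=0$; moreover $u(x)\to\infty$ as $x\to0^+$.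
   Context: $u(x;\epsilon)$ is the mean exit time from $(\epsilon,1)$ of the solution of $dX=X(1-X)\,dt+\lambda X\,dB$ (Itô) started at $x$; the limit $u(x)$ is interpreted as the expected time to reach the (rescaled) carrying capacity $x=1$. *)

theory Defs
  imports "HOL-Analysis.Analysis"
begin

fun mt_a :: "real \<Rightarrow> nat \<Rightarrow> real" where
  "mt_a lam 0 = - 1 / (1 - lam\<^sup>2 / 2)"
| "mt_a lam (Suc 0) = - 1 / (1 - lam\<^sup>2 / 2)"
| "mt_a lam (Suc (Suc n)) =
     real (Suc n) / (real (Suc (Suc n)) * (1 + lam\<^sup>2 * real (Suc n) / 2)) * mt_a lam (Suc n)"

definition mt_Y :: "real \<Rightarrow> real \<Rightarrow> real" where
  "mt_Y lam x = mt_a lam 0 * ln x + (\<Sum>n. mt_a lam (Suc n) * x ^ Suc n)"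

end

theory Submission
  imports Defs "HOL-Real_Asymp.Real_Asymp"
begin

text \<open>
  Write Y = a0 ln x + F. The coefficient ratio of F tends to 0, so F is entire, and the
  recursion for the a_n says exactly that (lam^2/2) x^2 F'' + x (1 - x) F' = a0 x; together
  with a0 (1 - lam^2/2) = -1 this is the ODE for Y.

  The difference V of u(.; eps) and Y - Y(1) solves the homogeneous equation with V(1) = 0,
  hence V' = k x^(-b) e^(b x) with b = 2/lam^2 > 1, and |V(x)| = |k| * integral_x^1 s^(-b) e^(b s) ds
  lies between |k| P(x) and e^b |k| P(x), where P(x) = integral_x^1 s^(-b) ds.
  At x = eps we have |V(eps)| = |Y(eps) - Y(1)|, so |k| <= |Y(eps) - Y(1)| / P(eps) --> 0:
  Y grows only logarithmically at 0, while P(eps) ~ eps^(1-b) / (b - 1).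
\<close>

lemma summable_power_series_ratio_tendsto_zero:
  fixes c :: "nat \<Rightarrow> 'a::{real_normed_field,banach}"
  assumes ratio: "\<forall>\<^sub>F n in sequentially. norm (c (Suc n)) \<le> r n * norm (c n)"
    and r: "r \<longlonglongrightarrow> 0"
  shows "summable (\<lambda>n. c n * x ^ n)"
proof -
  have "\<forall>\<^sub>F n in sequentially. r n * norm x \<le> 1/2"
  proof -
    have "(\<lambda>n. r n * norm x) \<longlonglongrightarrow> 0 * norm x" by (intro tendsto_intros r)
    then have "\<forall>\<^sub>F n in sequentially. r n * norm x < 1/2" by (rule order_tendstoD) simp
    then show ?thesis by (rule eventually_mono) simp
  qed
  from eventually_conj[OF ratio this] obtain N
    where N: "\<And>n. n \<ge> N \<Longrightarrow> norm (c (Suc n)) \<le> r n * norm (c n) \<and> r n * norm x \<le> 1/2"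
    unfolding eventually_sequentially by blast
  show ?thesis
  proof (rule summable_ratio_test[where c = "1/2" and N = N])
    fix n assume "n \<ge> N"
    then have cn: "norm (c (Suc n)) \<le> r n * norm (c n)" and rx: "r n * norm x \<le> 1/2" using N by auto
    have "norm (c (Suc n)) * norm (x ^ Suc n) \<le> r n * norm (c n) * norm (x ^ Suc n)"
      using cn by (rule mult_right_mono) simp
    then have "norm (c (Suc n) * x ^ Suc n) \<le> (r n * norm x) * norm (c n * x ^ n)"
      by (simp add: norm_mult norm_power mult_ac)
    also have "\<dots> \<le> 1/2 * norm (c n * x ^ n)" by (rule mult_right_mono[OF rx]) simp
    finally show "norm (c (Suc n) * x ^ Suc n) \<le> 1/2 * norm (c n * x ^ n)" .
  qed simp
qed

lemma sums_mult_diffs_power: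
  fixes c :: "nat \<Rightarrow> 'a::{real_normed_field,banach}"
  assumes "summable (\<lambda>n. diffs c n * x ^ n)"
  shows "(\<lambda>n. of_nat n * c n * x ^ n) sums (x * (\<Sum>n. diffs c n * x ^ n))"
proof -
  have "(\<lambda>n. x * (diffs c n * x ^ n)) sums (x * (\<Sum>n. diffs c n * x ^ n))"
    by (intro sums_mult summable_sums assms)
  also have "(\<lambda>n. x * (diffs c n * x ^ n)) = (\<lambda>n. of_nat (Suc n) * c (Suc n) * x ^ Suc n)"
    by (simp add: diffs_def mult_ac)
  finally show ?thesis using sums_Suc_iff[of "\<lambda>n. of_nat n * c n * x ^ n"] by simp
qed

lemma sums_mult_diffs2_power:
  fixes c :: "nat \<Rightarrow> 'a::{real_normed_field,banach}"
  assumes "summable (\<lambda>n. diffs (diffs c) n * x ^ n)"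
  shows "(\<lambda>n. of_nat n * of_nat (n - 1) * c n * x ^ n) sums (x\<^sup>2 * (\<Sum>n. diffs (diffs c) n * x ^ n))"
proof -
  have "(\<lambda>n. x\<^sup>2 * (diffs (diffs c) n * x ^ n)) sums (x\<^sup>2 * (\<Sum>n. diffs (diffs c) n * x ^ n))"
    by (intro sums_mult summable_sums assms)
  also have "(\<lambda>n. x\<^sup>2 * (diffs (diffs c) n * x ^ n))
      = (\<lambda>n. of_nat (Suc (Suc n)) * of_nat (Suc n) * c (Suc (Suc n)) * x ^ Suc (Suc n))"
    by (simp add: diffs_def power2_eq_square mult_ac)
  finally have "(\<lambda>n. of_nat (Suc n) * of_nat n * c (Suc n) * x ^ Suc n) sums (x\<^sup>2 * (\<Sum>n. diffs (diffs c) n * x ^ n))"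
    using sums_Suc_iff[of "\<lambda>n. of_nat (Suc n) * of_nat n * c (Suc n) * x ^ Suc n"] by simp
  then show ?thesis using sums_Suc_iff[of "\<lambda>n. of_nat n * of_nat (n - 1) * c n * x ^ n"] by simp
qed

lemma linear_ode_solution_powr_exp:
  fixes W :: "real \<Rightarrow> real"
  assumes "0 \<le> a"
    and W': "\<And>t. t \<in> {a<..<c} \<Longrightarrow> (W has_real_derivative - b * (1 - t) / t * W t) (at t)"
  shows "\<exists>k. \<forall>t\<in>{a<..<c}. W t = k * (t powr (- b) * exp (b * t))"
proof -
  \<comment> \<open>s^b e^(-b s) is an integrating factor\<close>
  have zero_deriv: "((\<lambda>s. s powr b * exp (- b * s) * W s) has_real_derivative 0) (at t within {a<..<c})"
    if t: "t \<in> {a<..<c}" for t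
  proof -
    have "t > 0" using t \<open>0 \<le> a\<close> by simp
    have "((\<lambda>s. s powr b * exp (- b * s) * W s) has_real_derivative
        (b * t powr (b - 1) * exp (- b * t) - b * t powr b * exp (- b * t)) * W t
        + t powr b * exp (- b * t) * (- b * (1 - t) / t * W t)) (at t)"
      using \<open>t > 0\<close> W'[OF t] by (auto intro!: derivative_eq_intros simp: algebra_simps)
    also have "(b * t powr (b - 1) * exp (- b * t) - b * t powr b * exp (- b * t)) * W t
        + t powr b * exp (- b * t) * (- b * (1 - t) / t * W t) = 0"
      using \<open>t > 0\<close> by (simp add: powr_diff field_simps)
    finally show ?thesis by (rule has_field_derivative_at_within)
  qed
  obtain k where k: "\<forall>t\<in>{a<..<c}. t powr b * exp (- b * t) * W t = k"
    using has_field_derivative_zero_constant[OF convex_real_interval(8) zero_deriv] by blast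
  show ?thesis
  proof (intro exI ballI)
    fix t assume t: "t \<in> {a<..<c}"
    then have "t > 0" using \<open>0 \<le> a\<close> by simp
    with k t show "W t = k * (t powr (- b) * exp (b * t))"
      by (auto simp: powr_minus exp_minus field_simps)
  qed
qed

definition inv_powr_integral :: "real \<Rightarrow> real \<Rightarrow> real" where
  "inv_powr_integral b t = (t powr (1 - b) - 1) / (b - 1)"

lemma has_integral_inv_powr:
  assumes "1 < b" "0 < t" "t \<le> 1"
  shows "((\<lambda>s. s powr (- b)) has_integral inv_powr_integral b t) {t..1}"
proof -
  have "((\<lambda>s. s powr (- b)) has_integral (1 powr (1 - b) / (1 - b) - t powr (1 - b) / (1 - b))) {t..1}"
  proof (rule fundamental_theorem_of_calculus)
    fix s assume "s \<in> {t..1}"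
    then have "s > 0" using assms by simp
    then have "((\<lambda>s. s powr (1 - b) / (1 - b)) has_real_derivative (1 - b) * s powr (1 - b - 1) / (1 - b)) (at s)"
      by (intro DERIV_cdivide has_real_derivative_powr)
    then show "((\<lambda>s. s powr (1 - b) / (1 - b)) has_vector_derivative s powr (- b)) (at s within {t..1})"
      using \<open>1 < b\<close> by (simp add: has_real_derivative_iff_has_vector_derivative[symmetric] has_field_derivative_at_within)
  qed (use assms in simp)
  moreover have "1 powr (1 - b) / (1 - b) - t powr (1 - b) / (1 - b) = inv_powr_integral b t"
    unfolding inv_powr_integral_def
    by (simp add: diff_divide_distrib[symmetric]) (metis minus_diff_eq minus_divide_divide)
  ultimately show ?thesis by simp
qed

lemma integral_powr_exp_bounds:
  assumes "1 < b" "0 < t" "t \<le> 1"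
  shows "(\<lambda>s. s powr (- b) * exp (b * s)) integrable_on {t..1}"
    and "0 \<le> inv_powr_integral b t"
    and "inv_powr_integral b t \<le> integral {t..1} (\<lambda>s. s powr (- b) * exp (b * s))"
    and "integral {t..1} (\<lambda>s. s powr (- b) * exp (b * s)) \<le> exp b * inv_powr_integral b t"
proof -
  show int: "(\<lambda>s. s powr (- b) * exp (b * s)) integrable_on {t..1}"
    using assms by (intro integrable_continuous_interval continuous_intros) auto
  note P = has_integral_inv_powr[OF assms]
  show "0 \<le> inv_powr_integral b t"
    by (rule has_integral_nonneg[OF P]) simp
  show "inv_powr_integral b t \<le> integral {t..1} (\<lambda>s. s powr (- b) * exp (b * s))"
    using assms by (intro has_integral_le[OF P integrable_integral[OF int]]) auto
  show "integral {t..1} (\<lambda>s. s powr (- b) * exp (b * s)) \<le> exp b * inv_powr_integral b t"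
    using assms by (intro has_integral_le[OF integrable_integral[OF int] has_integral_mult_right[OF P]])
      (auto simp: mult.commute)
qed

lemma abs_eq_integral_powr_exp:
  fixes V :: "real \<Rightarrow> real"
  assumes "0 < e" "e \<le> t" "t \<le> 1"
    and "continuous_on {e..1} V" "V 1 = 0"
    and V': "\<And>s. s \<in> {e<..<1} \<Longrightarrow> (V has_real_derivative k * (s powr (- b) * exp (b * s))) (at s)"
  shows "\<bar>V t\<bar> = \<bar>k\<bar> * integral {t..1} (\<lambda>s. s powr (- b) * exp (b * s))"
proof -
  have "((\<lambda>s. k * (s powr (- b) * exp (b * s))) has_integral V 1 - V t) {t..1}"
  proof (rule fundamental_theorem_of_calculus_interior)
    show "continuous_on {t..1} V" using assms by (auto elim: continuous_on_subset)
    show "(V has_vector_derivative k * (s powr (- b) * exp (b * s))) (at s)" if "s \<in> {t<..<1}" for s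
      using V' that assms by (simp add: has_real_derivative_iff_has_vector_derivative[symmetric])
  qed (use assms in simp)
  moreover have int: "(\<lambda>s. s powr (- b) * exp (b * s)) integrable_on {t..1}"
    using assms by (intro integrable_continuous_interval continuous_intros) auto
  ultimately have "- V t = k * integral {t..1} (\<lambda>s. s powr (- b) * exp (b * s))"
    using \<open>V 1 = 0\<close> by (metis diff_0 has_integral_integral has_integral_mult_right has_integral_unique)
  moreover have "integral {t..1} (\<lambda>s. s powr (- b) * exp (b * s)) \<ge> 0"
    by (rule integral_nonneg[OF int]) simp
  ultimately show ?thesis by (metis abs_minus_cancel abs_mult abs_of_nonneg)
qed

definition logistic_ode_solution :: "real \<Rightarrow> (real \<Rightarrow> real) \<Rightarrow> real set \<Rightarrow> bool" where
  "logistic_ode_solution lam f S \<longleftrightarrow> (\<exists>f1 f2. \<forall>x\<in>S.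
     (f has_real_derivative f1 x) (at x) \<and> (f1 has_real_derivative f2 x) (at x) \<and>
     lam\<^sup>2 / 2 * x\<^sup>2 * f2 x + x * (1 - x) * f1 x = -1)"

lemma logistic_ode_solution_diff_const:
  "logistic_ode_solution lam f S \<Longrightarrow> logistic_ode_solution lam (\<lambda>x. f x - c) S"
  unfolding logistic_ode_solution_def by (fastforce intro: derivative_eq_intros)

lemma logistic_ode_solution_subset:
  "logistic_ode_solution lam f S \<Longrightarrow> T \<subseteq> S \<Longrightarrow> logistic_ode_solution lam f T"
  unfolding logistic_ode_solution_def by blast

lemma logistic_ode_solution_continuous_on:
  assumes "logistic_ode_solution lam f S" "open S"
  shows "continuous_on S f"
  using assms unfolding logistic_ode_solution_def
  by (metis DERIV_isCont continuous_at_imp_continuous_on)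

lemma logistic_ode_solutions_diff_deriv:
  fixes u v :: "real \<Rightarrow> real" and lam :: real
  defines "b \<equiv> 2 / lam\<^sup>2"
  assumes "0 < lam" "0 \<le> a"
    and sol: "logistic_ode_solution lam u {a<..<c}" "logistic_ode_solution lam v {a<..<c}"
  shows "\<exists>k. \<forall>t\<in>{a<..<c}.
    ((\<lambda>t. u t - v t) has_real_derivative k * (t powr (- b) * exp (b * t))) (at t)"
proof -
  obtain u1 u2 where u: "\<And>t. t \<in> {a<..<c} \<Longrightarrow> (u has_real_derivative u1 t) (at t) \<and>
      (u1 has_real_derivative u2 t) (at t) \<and> lam\<^sup>2 / 2 * t\<^sup>2 * u2 t + t * (1 - t) * u1 t = -1"
    using sol(1) unfolding logistic_ode_solution_def by blast
  obtain v1 v2 where v: "\<And>t. t \<in> {a<..<c} \<Longrightarrow> (v has_real_derivative v1 t) (at t) \<and>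
      (v1 has_real_derivative v2 t) (at t) \<and> lam\<^sup>2 / 2 * t\<^sup>2 * v2 t + t * (1 - t) * v1 t = -1"
    using sol(2) unfolding logistic_ode_solution_def by blast
  define W where "W t = u1 t - v1 t" for t
  have "(W has_real_derivative - b * (1 - t) / t * W t) (at t)" if t: "t \<in> {a<..<c}" for t
  proof -
    have "t > 0" using t \<open>0 \<le> a\<close> by simp
    have "lam\<^sup>2 / 2 * t\<^sup>2 * (u2 t - v2 t) + t * (1 - t) * W t
        = (lam\<^sup>2 / 2 * t\<^sup>2 * u2 t + t * (1 - t) * u1 t) - (lam\<^sup>2 / 2 * t\<^sup>2 * v2 t + t * (1 - t) * v1 t)"
      unfolding W_def by (simp add: algebra_simps diff_divide_distrib)
    also have "\<dots> = 0" using u[OF t] v[OF t] by simp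
    finally have "t * (lam\<^sup>2 / 2 * t * (u2 t - v2 t) + (1 - t) * W t) = 0"
      by (simp add: algebra_simps power2_eq_square)
    then have "lam\<^sup>2 / 2 * t * (u2 t - v2 t) + (1 - t) * W t = 0"
      using \<open>t > 0\<close> by simp
    then have "u2 t - v2 t = - b * (1 - t) / t * W t"
      using \<open>t > 0\<close> \<open>0 < lam\<close> unfolding b_def by (simp add: field_simps)
    moreover have "(W has_real_derivative u2 t - v2 t) (at t)"
      unfolding W_def using u[OF t] v[OF t] by (auto intro: derivative_eq_intros)
    ultimately show ?thesis by simp
  qed
  then have "\<exists>k. \<forall>t\<in>{a<..<c}. W t = k * (t powr (- b) * exp (b * t))"
    by (rule linear_ode_solution_powr_exp[OF \<open>0 \<le> a\<close>])
  then obtain k where k: "\<forall>t\<in>{a<..<c}. W t = k * (t powr (- b) * exp (b * t))" ..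
  show ?thesis
  proof (intro exI ballI)
    fix t assume t: "t \<in> {a<..<c}"
    have "((\<lambda>t. u t - v t) has_real_derivative u1 t - v1 t) (at t)"
      using u[OF t] v[OF t] by (intro DERIV_diff) auto
    then show "((\<lambda>t. u t - v t) has_real_derivative k * (t powr (- b) * exp (b * t))) (at t)"
      using k t unfolding W_def by simp
  qed
qed

lemma logistic_ode_solutions_diff_bound:
  fixes u v :: "real \<Rightarrow> real" and lam :: real
  defines "b \<equiv> 2 / lam\<^sup>2"
  assumes lam: "0 < lam" "lam\<^sup>2 < 2" and ex: "0 < e" "e \<le> x" "x \<le> 1"
    and cont: "continuous_on {e..1} u" "continuous_on {e..1} v" and "u 1 = v 1"
    and sol: "logistic_ode_solution lam u {e<..<1}" "logistic_ode_solution lam v {e<..<1}"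
  shows "\<bar>u x - v x\<bar> * inv_powr_integral b e \<le> exp b * inv_powr_integral b x * \<bar>u e - v e\<bar>"
proof -
  have "1 < b" using lam unfolding b_def by (simp add: field_simps)
  obtain k where k: "\<forall>t\<in>{e<..<1}.
      ((\<lambda>t. u t - v t) has_real_derivative k * (t powr (- b) * exp (b * t))) (at t)"
    using logistic_ode_solutions_diff_deriv[OF lam(1) less_imp_le[OF ex(1)] sol] unfolding b_def ..
  define I where "I t = integral {t..1} (\<lambda>s. s powr (- b) * exp (b * s))" for t
  have V: "\<bar>u t - v t\<bar> = \<bar>k\<bar> * I t" if "e \<le> t" "t \<le> 1" for t
    unfolding I_def
  proof (rule abs_eq_integral_powr_exp[where V = "\<lambda>t. u t - v t"])
    show "((\<lambda>t. u t - v t) has_real_derivative k * (s powr (- b) * exp (b * s))) (at s)"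
      if "s \<in> {e<..<1}" for s
      using k that by blast
  qed (use ex that cont \<open>u 1 = v 1\<close> in \<open>auto intro: continuous_on_diff\<close>)
  note bounds_e = integral_powr_exp_bounds[OF \<open>1 < b\<close>, of e, folded I_def]
  note bounds_x = integral_powr_exp_bounds[OF \<open>1 < b\<close>, of x, folded I_def]
  have "\<bar>u x - v x\<bar> * inv_powr_integral b e = \<bar>k\<bar> * (I x * inv_powr_integral b e)"
    using V ex by simp
  also have "\<dots> \<le> \<bar>k\<bar> * (exp b * inv_powr_integral b x * I e)"
    using bounds_e bounds_x ex by (intro mult_left_mono mult_mono) auto
  also have "\<dots> = exp b * inv_powr_integral b x * \<bar>u e - v e\<bar>"
    using V ex by simp
  finally show ?thesis .
qed

text \<open>The constant term is 0: in mt_Y, a0 multiplies ln x, not x^0.\<close>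

definition mt_coeff :: "real \<Rightarrow> nat \<Rightarrow> real" where
  "mt_coeff lam n = (if n = 0 then 0 else mt_a lam n)"

definition mt_series :: "real \<Rightarrow> real \<Rightarrow> real" where
  "mt_series lam x = (\<Sum>n. mt_coeff lam n * x ^ n)"

lemma mt_a_recurrence:
  "real (Suc (Suc n)) * (1 + lam\<^sup>2 * real (Suc n) / 2) * mt_a lam (Suc (Suc n))
     = real (Suc n) * mt_a lam (Suc n)"
proof -
  have "1 + lam\<^sup>2 * real (Suc n) / 2 > 0" by (simp add: add_pos_nonneg)
  then show ?thesis by simp
qed

lemma summable_mt_coeff:
  assumes "0 < lam"
  shows "summable (\<lambda>n. mt_coeff lam n * x ^ n)"
proof (rule summable_power_series_ratio_tendsto_zero)
  show "(\<lambda>n. 1 / (1 + lam\<^sup>2 * real n / 2)) \<longlonglongrightarrow> 0"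
    using assms by real_asymp
  show "\<forall>\<^sub>F n in sequentially. norm (mt_coeff lam (Suc n)) \<le> 1 / (1 + lam\<^sup>2 * real n / 2) * norm (mt_coeff lam n)"
    unfolding eventually_sequentially
  proof (intro exI allI impI)
    fix n :: nat assume "1 \<le> n"
    then obtain m where n: "n = Suc m" by (cases n) auto
    have d: "1 + lam\<^sup>2 * real n / 2 > 0" by (simp add: add_pos_nonneg)
    have "\<bar>mt_a lam (Suc n)\<bar> = real n / (real (Suc n) * (1 + lam\<^sup>2 * real n / 2)) * \<bar>mt_a lam n\<bar>"
      using d by (simp add: n abs_mult)
    also have "\<dots> \<le> 1 / (1 + lam\<^sup>2 * real n / 2) * \<bar>mt_a lam n\<bar>"
      using d by (intro mult_right_mono) (simp_all add: divide_simps)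
    finally show "norm (mt_coeff lam (Suc n)) \<le> 1 / (1 + lam\<^sup>2 * real n / 2) * norm (mt_coeff lam n)"
      using n by (simp add: mt_coeff_def)
  qed
qed

lemma mt_Y_eq_ln_plus_series:
  assumes "0 < lam"
  shows "mt_Y lam x = mt_a lam 0 * ln x + mt_series lam x"
proof -
  have "(\<Sum>n. mt_coeff lam (Suc n) * x ^ Suc n) = mt_series lam x - mt_coeff lam 0 * x ^ 0"
    unfolding mt_series_def by (rule suminf_split_head) (rule summable_mt_coeff[OF assms])
  then show ?thesis
    unfolding mt_Y_def by (simp add: mt_coeff_def)
qed

lemma summable_diffs_mt_coeff:
  "0 < lam \<Longrightarrow> summable (\<lambda>n. diffs (mt_coeff lam) n * x ^ n)"
  "0 < lam \<Longrightarrow> summable (\<lambda>n. diffs (diffs (mt_coeff lam)) n * x ^ n)"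
  by (intro termdiff_converges_all summable_mt_coeff; assumption)+

lemma mt_series_ode:
  fixes lam x :: real
  defines "S1 \<equiv> \<Sum>n. diffs (mt_coeff lam) n * x ^ n"
    and "S2 \<equiv> \<Sum>n. diffs (diffs (mt_coeff lam)) n * x ^ n"
  assumes "0 < lam"
  shows "lam\<^sup>2 / 2 * (x\<^sup>2 * S2) + x * S1 - x\<^sup>2 * S1 = mt_a lam 0 * x"
proof -
  define c where "c = mt_coeff lam"
  have sA: "(\<lambda>n. real n * real (n - 1) * c n * x ^ n) sums (x\<^sup>2 * S2)"
    unfolding S2_def c_def by (intro sums_mult_diffs2_power summable_diffs_mt_coeff assms)
  have sB: "(\<lambda>n. real n * c n * x ^ n) sums (x * S1)"
    unfolding S1_def c_def by (intro sums_mult_diffs_power summable_diffs_mt_coeff assms)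
  have "(\<lambda>n. x * (real n * c n * x ^ n)) sums (x * (x * S1))"
    by (rule sums_mult[OF sB])
  then have sC: "(\<lambda>n. real (n - 1) * c (n - 1) * x ^ n) sums (x\<^sup>2 * S1)"
    using sums_Suc_iff[of "\<lambda>n. real (n - 1) * c (n - 1) * x ^ n"]
    by (simp add: power2_eq_square mult_ac)
  have "(\<lambda>n. lam\<^sup>2 / 2 * (real n * real (n - 1) * c n * x ^ n) + real n * c n * x ^ n
      - real (n - 1) * c (n - 1) * x ^ n) sums (lam\<^sup>2 / 2 * (x\<^sup>2 * S2) + x * S1 - x\<^sup>2 * S1)"
    by (intro sums_diff sums_add sums_mult sA sB sC)
  also have "(\<lambda>n. lam\<^sup>2 / 2 * (real n * real (n - 1) * c n * x ^ n) + real n * c n * x ^ n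
      - real (n - 1) * c (n - 1) * x ^ n) = (\<lambda>n. if n = 1 then mt_a lam 0 * x else 0)"
  proof
    fix n
    consider "n = 0" | "n = 1" | m where "n = Suc (Suc m)"
      by (metis One_nat_def not0_implies_Suc)
    then show "lam\<^sup>2 / 2 * (real n * real (n - 1) * c n * x ^ n) + real n * c n * x ^ n
        - real (n - 1) * c (n - 1) * x ^ n = (if n = 1 then mt_a lam 0 * x else 0)"
    proof cases
      case (3 m)
      have "lam\<^sup>2 / 2 * (real n * real (n - 1) * c n * x ^ n) + real n * c n * x ^ n
          = real (Suc (Suc m)) * (1 + lam\<^sup>2 * real (Suc m) / 2) * mt_a lam (Suc (Suc m)) * x ^ n"
        by (simp only: 3 c_def mt_coeff_def) (simp add: algebra_simps del: mt_a.simps)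
      then show ?thesis
        unfolding mt_a_recurrence by (simp add: 3 c_def mt_coeff_def)
    qed (simp_all add: c_def mt_coeff_def)
  qed
  finally show ?thesis
    using sums_single[of 1 "\<lambda>_. mt_a lam 0 * x"] sums_unique2 by (simp add: if_distrib)
qed

lemma logistic_ode_solution_mt_Y:
  assumes "0 < lam" "lam\<^sup>2 < 2"
  shows "logistic_ode_solution lam (mt_Y lam) {0<..}"
proof -
  define S1 where "S1 x = (\<Sum>n. diffs (mt_coeff lam) n * x ^ n)" for x
  define S2 where "S2 x = (\<Sum>n. diffs (diffs (mt_coeff lam)) n * x ^ n)" for x
  have dS: "(mt_series lam has_real_derivative S1 x) (at x)" for x
    unfolding mt_series_def S1_def
    by (intro termdiffs_strong_converges_everywhere summable_mt_coeff assms)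
  have dS1: "(S1 has_real_derivative S2 x) (at x)" for x
    unfolding S1_def S2_def
    by (intro termdiffs_strong_converges_everywhere summable_diffs_mt_coeff assms)
  have Y: "mt_Y lam = (\<lambda>x. mt_a lam 0 * ln x + mt_series lam x)"
    using mt_Y_eq_ln_plus_series[OF assms(1)] by blast
  have a0: "mt_a lam 0 * (1 - lam\<^sup>2 / 2) = -1"
    using assms(2) by simp
  show ?thesis
    unfolding logistic_ode_solution_def
  proof (intro exI ballI conjI)
    fix x :: real assume "x \<in> {0<..}"
    then have "x > 0" by simp
    show "(mt_Y lam has_real_derivative mt_a lam 0 / x + S1 x) (at x)"
      unfolding Y using \<open>x > 0\<close> by (auto intro!: derivative_eq_intros dS simp del: mt_a.simps)
    show "((\<lambda>x. mt_a lam 0 / x + S1 x) has_real_derivative - mt_a lam 0 / x\<^sup>2 + S2 x) (at x)"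
      using \<open>x > 0\<close>
      by (auto intro!: derivative_eq_intros dS1 simp: power2_eq_square simp del: mt_a.simps)
    have "lam\<^sup>2 / 2 * x\<^sup>2 * (- mt_a lam 0 / x\<^sup>2 + S2 x) + x * (1 - x) * (mt_a lam 0 / x + S1 x)
        = (lam\<^sup>2 / 2 * (x\<^sup>2 * S2 x) + x * S1 x - x\<^sup>2 * S1 x) - mt_a lam 0 * x + mt_a lam 0 * (1 - lam\<^sup>2 / 2)"
      using \<open>x > 0\<close> by (simp add: field_simps power2_eq_square del: mt_a.simps)
    then show "lam\<^sup>2 / 2 * x\<^sup>2 * (- mt_a lam 0 / x\<^sup>2 + S2 x) + x * (1 - x) * (mt_a lam 0 / x + S1 x) = -1"
      using mt_series_ode[OF assms(1), of x] a0 unfolding S1_def S2_def by (simp del: mt_a.simps)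
  qed
qed

lemma filterlim_inv_powr_integral_at_top:
  "1 < b \<Longrightarrow> filterlim (inv_powr_integral b) at_top (at_right 0)"
  unfolding inv_powr_integral_def by real_asymp

lemma tendsto_ln_div_inv_powr_integral:
  "1 < b \<Longrightarrow> ((\<lambda>x. ln x / inv_powr_integral b x) \<longlongrightarrow> 0) (at_right 0)"
  unfolding inv_powr_integral_def by real_asymp

lemma tendsto_mt_series_at_right_0:
  assumes "0 < lam"
  shows "(mt_series lam \<longlongrightarrow> mt_series lam 0) (at_right 0)"
proof -
  have "isCont (mt_series lam) 0"
    unfolding mt_series_def
    by (rule DERIV_isCont[OF termdiffs_strong_converges_everywhere[OF summable_mt_coeff[OF assms]]])
  then show ?thesis
    by (simp add: isCont_def filterlim_at_split)
qed

lemma filterlim_mt_Y_at_top: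
  assumes "0 < lam" "lam\<^sup>2 < 2"
  shows "filterlim (\<lambda>x. mt_Y lam x - c) at_top (at_right 0)"
proof -
  have "- mt_a lam 0 > 0" using assms(2) by (simp add: divide_simps)
  moreover have "filterlim (\<lambda>x::real. - ln x) at_top (at_right 0)"
    by real_asymp
  ultimately have "filterlim (\<lambda>x. (- mt_a lam 0) * (- ln x)) at_top (at_right 0)"
    by (rule filterlim_tendsto_pos_mult_at_top[OF tendsto_const])
  then have "filterlim (\<lambda>x. (mt_series lam x - c) + (- mt_a lam 0) * (- ln x)) at_top (at_right 0)"
    by (intro filterlim_tendsto_add_at_top[OF tendsto_diff[OF tendsto_mt_series_at_right_0[OF assms(1)] tendsto_const]])
  then show ?thesis
    by (simp add: mt_Y_eq_ln_plus_series[OF assms(1)] algebra_simps del: mt_a.simps)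
qed

lemma tendsto_mt_Y_div_inv_powr_integral:
  assumes "0 < lam" "1 < b"
  shows "((\<lambda>x. (mt_Y lam x - c) / inv_powr_integral b x) \<longlongrightarrow> 0) (at_right 0)"
proof -
  have "((\<lambda>x. mt_a lam 0 * (ln x / inv_powr_integral b x)
      + (mt_series lam x - c) / inv_powr_integral b x) \<longlongrightarrow> mt_a lam 0 * 0 + 0) (at_right 0)"
    using assms
    by (intro tendsto_add tendsto_mult tendsto_const tendsto_ln_div_inv_powr_integral
        tendsto_divide_0[OF tendsto_diff[OF tendsto_mt_series_at_right_0 tendsto_const]]
        filterlim_at_top_imp_at_infinity filterlim_inv_powr_integral_at_top)
  then show ?thesis
    by (simp add: mt_Y_eq_ln_plus_series[OF assms(1)] add_divide_distrib diff_divide_distrib add_diff_eq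
        del: mt_a.simps)
qed

lemma tendsto_dirichlet_solution_mt_Y:
  fixes u :: "real \<Rightarrow> real \<Rightarrow> real"
  assumes lam: "0 < lam" "lam\<^sup>2 < 2" and x: "0 < x" "x < 1"
    and u: "\<And>\<epsilon>. 0 < \<epsilon> \<Longrightarrow> \<epsilon> < 1 \<Longrightarrow> continuous_on {\<epsilon>..1} (u \<epsilon>) \<and> u \<epsilon> \<epsilon> = 0 \<and> u \<epsilon> 1 = 0
        \<and> logistic_ode_solution lam (u \<epsilon>) {\<epsilon><..<1}"
  shows "((\<lambda>\<epsilon>. u \<epsilon> x) \<longlongrightarrow> mt_Y lam x - mt_Y lam 1) (at_right 0)"
proof -
  define b where "b = 2 / lam\<^sup>2"
  define v where "v y = mt_Y lam y - mt_Y lam 1" for y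
  have "1 < b" using lam unfolding b_def by (simp add: field_simps)
  have v_sol: "logistic_ode_solution lam v {0<..}"
    unfolding v_def by (intro logistic_ode_solution_diff_const logistic_ode_solution_mt_Y lam)
  have v_cont: "continuous_on {e..1} v" if "0 < e" for e
    using logistic_ode_solution_continuous_on[OF v_sol] that by (auto elim: continuous_on_subset)
  have "\<forall>\<^sub>F e in at_right 0. 0 < e \<and> e < x"
    using x(1) by (intro eventually_conj eventually_at_right_less) (simp add: eventually_at_right_field, blast)
  moreover have "\<forall>\<^sub>F e in at_right 0. 0 < inv_powr_integral b e"
    using filterlim_inv_powr_integral_at_top[OF \<open>1 < b\<close>] unfolding filterlim_at_top_dense by blast
  ultimately have "\<forall>\<^sub>F e in at_right 0.
      norm (u e x - v x) \<le> exp b * inv_powr_integral b x * \<bar>v e / inv_powr_integral b e\<bar>"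
  proof eventually_elim
    case (elim e)
    then have "0 < e" "e < 1" "0 < inv_powr_integral b e" using x by auto
    note ue = u[OF this(1,2)]
    have "\<bar>u e x - v x\<bar> * inv_powr_integral b e \<le> exp b * inv_powr_integral b x * \<bar>u e e - v e\<bar>"
      unfolding b_def
    proof (rule logistic_ode_solutions_diff_bound)
      show "logistic_ode_solution lam v {e<..<1}"
        using \<open>0 < e\<close> by (intro logistic_ode_solution_subset[OF v_sol]) auto
    qed (use lam x elim ue v_cont v_def in auto)
    then show ?case
      using ue \<open>0 < inv_powr_integral b e\<close> by (simp add: pos_le_divide_eq abs_divide)
  qed
  moreover have "((\<lambda>e. exp b * inv_powr_integral b x * \<bar>v e / inv_powr_integral b e\<bar>) \<longlongrightarrow> 0) (at_right 0)"
    using tendsto_mult[OF tendsto_const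
        tendsto_rabs[OF tendsto_mt_Y_div_inv_powr_integral[OF lam(1) \<open>1 < b\<close>]]]
    unfolding v_def by simp
  ultimately have "((\<lambda>e. u e x - v x) \<longlongrightarrow> 0) (at_right 0)"
    by (rule Lim_null_comparison)
  then show ?thesis
    unfolding v_def by (simp add: LIM_zero_iff)
qed

theorem mainTheorem6:
  fixes lam :: real and u :: "real \<Rightarrow> real \<Rightarrow> real"
  assumes lam_pos: "0 < lam" and lam_lt: "lam < sqrt 2"
    and u_sol: "\<And>\<epsilon>. 0 < \<epsilon> \<Longrightarrow> \<epsilon> < 1 \<Longrightarrow>
        continuous_on {\<epsilon>..1} (u \<epsilon>) \<and> u \<epsilon> \<epsilon> = 0 \<and> u \<epsilon> 1 = 0 \<and>
        (\<exists>u1 u2. \<forall>x\<in>{\<epsilon><..<1}.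
            (u \<epsilon> has_real_derivative u1 x) (at x) \<and>
            (u1 has_real_derivative u2 x) (at x) \<and>
            lam\<^sup>2 / 2 * x\<^sup>2 * u2 x + x * (1 - x) * u1 x = -1)"
  shows "(\<forall>x::real. summable (\<lambda>n. mt_a lam (Suc n) * x ^ Suc n))
    \<and> (\<exists>Y1 Y2. \<forall>x>0.
            (mt_Y lam has_real_derivative Y1 x) (at x) \<and>
            (Y1 has_real_derivative Y2 x) (at x) \<and>
            lam\<^sup>2 / 2 * x\<^sup>2 * Y2 x + x * (1 - x) * Y1 x = -1)
    \<and> (\<forall>x\<in>{0<..<1}. ((\<lambda>\<epsilon>. u \<epsilon> x) \<longlongrightarrow> mt_Y lam x - mt_Y lam 1) (at_right 0))
    \<and> (\<exists>v1 v2. \<forall>x\<in>{0<..<1}.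
            ((\<lambda>y. mt_Y lam y - mt_Y lam 1) has_real_derivative v1 x) (at x) \<and>
            (v1 has_real_derivative v2 x) (at x) \<and>
            lam\<^sup>2 / 2 * x\<^sup>2 * v2 x + x * (1 - x) * v1 x = -1)
    \<and> mt_Y lam 1 - mt_Y lam 1 = 0
    \<and> filterlim (\<lambda>x. mt_Y lam x - mt_Y lam 1) at_top (at_right 0)"
proof -
  have "lam\<^sup>2 < (sqrt 2)\<^sup>2"
    using lam_pos lam_lt by (intro power_strict_mono) auto
  then have lam2: "lam\<^sup>2 < 2" by simp
  have Y_sol: "logistic_ode_solution lam (mt_Y lam) {0<..}"
    using lam_pos lam2 by (rule logistic_ode_solution_mt_Y)
  have "logistic_ode_solution lam (\<lambda>y. mt_Y lam y - mt_Y lam 1) {0<..<1}"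
    using logistic_ode_solution_diff_const[OF Y_sol] by (rule logistic_ode_solution_subset) auto
  moreover have "summable (\<lambda>n. mt_a lam (Suc n) * x ^ Suc n)" for x :: real
    using summable_mt_coeff[OF lam_pos, of x] by (subst (asm) summable_Suc_iff[symmetric]) (simp add: mt_coeff_def)
  moreover have "((\<lambda>\<epsilon>. u \<epsilon> x) \<longlongrightarrow> mt_Y lam x - mt_Y lam 1) (at_right 0)" if "x \<in> {0<..<1}" for x
    using lam_pos lam2 that u_sol
    by (intro tendsto_dirichlet_solution_mt_Y) (auto simp: logistic_ode_solution_def)
  ultimately show ?thesis
    using Y_sol filterlim_mt_Y_at_top[OF lam_pos lam2] unfolding logistic_ode_solution_def
    by (auto simp: Ball_def)
qed

end
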